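(* Let $f\colon\mathbb{R}^m\to\mathbb{R}$ be as in the context, let $p\in\mathbb{R}^m$, and let $L\le m$ be a positive integer. Let $q_1,\dots,q_D$ be the pairwise distinct elements of $\{-\frac{2\pi}{3},0,\frac{2\pi}{3}\}^m$ having at most $L$ non-zero entries (all such elements, each listed once). Define $\tilde f\colon\mathbb{R}^m\to\mathbb{R}$ by $$\tilde f(\theta)=\sum_{j=1}^D f(p+q_j)\,\tilde K(q_j,\theta-p)\quad\text{for all }\theta\in\mathbb{R}^m.$$ Then: (i) $D=\sum_{k=0}^L 2^k\binom{m}{k}$, i.e. obtaining $\tilde f$ requires evaluating $f$ at $D=\sum_{k=0}^L2^k\binom mk$ points; (ii) if $\vartheta\in\mathbb{R}^m$ has at most $L$ non-zero entries, then $\tilde f(p+\vartheta)=f(p+\vartheta)$; (iii) $D^\alpha(f-\tilde f)(p)=0$ for all multi-indices $\alpha\in(\mathbb{Z}_{\ge0})^m$ with $|\alpha|\le L$.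
   Context: The function $f\colon\mathbb{R}^m\to\mathbb{R}$ is $f(\theta)=\langle\psi(\theta)|\mathcal{M}|\psi(\theta)\rangle$, where $\mathcal{M}\in\mathbb{C}^{2^n\times2^n}$ is Hermitian and $|\psi(\theta)\rangle=C_{m+1}R_m(\theta_m)C_m\cdots R_1(\theta_1)C_1|0\rangle^{\otimes n}$ with $C_1,\dots,C_{m+1}$ arbitrary $n$-qubit unitaries and $R_j(\theta_j)=\exp(-i\frac{\theta_j}{2}G_j)$, where each $G_j\in\mathbb{C}^{2^n\times2^n}$ is Hermitian with set of eigenvalues $\{-1,1\}$. It is known that such $f$ is of the form $f(z)=\sum_{\omega\in\{-1,0,1\}^m}c_\omega e^{i\omega^\intercal z}$ with $\overline{c_{-\omega}}=c_\omega$. $\tilde K(x,z)=\prod_{j=1}^m\frac{1+2\cos(x_j-z_j)}{3}$ for $x,z\in\mathbb{R}^m$. $D^\alpha$ denotes the partial derivative of multi-index $\alpha$, $|\alpha|=\sum_i\alpha_i$. *)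

theory Defs
  imports "HOL-Analysis.Analysis" "Jordan_Normal_Form.Char_Poly"
begin

definition adj :: "complex mat \<Rightarrow> complex mat" where
  "adj A = mat (dim_col A) (dim_row A) (\<lambda>(i,j). cnj (A $$ (j,i)))"

definition hermitian_mat :: "nat \<Rightarrow> complex mat \<Rightarrow> bool" where
  "hermitian_mat N A \<longleftrightarrow> A \<in> carrier_mat N N \<and> adj A = A"

definition unitary_mat :: "nat \<Rightarrow> complex mat \<Rightarrow> bool" where
  "unitary_mat N U \<longleftrightarrow> U \<in> carrier_mat N N \<and> adj U * U = 1\<^sub>m N \<and> U * adj U = 1\<^sub>m N"

definition mat_exp :: "complex mat \<Rightarrow> complex mat" where
  "mat_exp A = mat (dim_row A) (dim_col A)
     (\<lambda>(i,j). (\<Sum>k. (A ^\<^sub>m k) $$ (i,j) / of_nat (fact k)))"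

definition rot :: "complex mat \<Rightarrow> real \<Rightarrow> complex mat" where
  "rot G t = mat_exp ((- \<i> * complex_of_real (t / 2)) \<cdot>\<^sub>m G)"

(* |0>^{\<otimes> n} *)
definition ket0 :: "nat \<Rightarrow> complex vec" where
  "ket0 n = unit_vec (2 ^ n) 0"

(* circuit_state n C G k \<theta> = C_{k+1} R_k(\<theta>_k) C_k ... R_1(\<theta>_1) C_1 |0>;
   parameters \<theta>_1..\<theta>_m are the values \<theta> 1, ..., \<theta> m *)
fun circuit_state :: "nat \<Rightarrow> (nat \<Rightarrow> complex mat) \<Rightarrow> (nat \<Rightarrow> complex mat) \<Rightarrow> nat
    \<Rightarrow> (nat \<Rightarrow> real) \<Rightarrow> complex vec" where
  "circuit_state n C G 0 \<theta> = C 1 *\<^sub>v ket0 n"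
| "circuit_state n C G (Suc k) \<theta> =
     C (k + 2) *\<^sub>v (rot (G (k + 1)) (\<theta> (k + 1)) *\<^sub>v circuit_state n C G k \<theta>)"

(* f(\<theta>) = <\<psi>(\<theta>)| M |\<psi>(\<theta>)>  (a real number for Hermitian M; we take Re) *)
definition qfun :: "nat \<Rightarrow> nat \<Rightarrow> (nat \<Rightarrow> complex mat) \<Rightarrow> (nat \<Rightarrow> complex mat)
    \<Rightarrow> complex mat \<Rightarrow> (nat \<Rightarrow> real) \<Rightarrow> real" where
  "qfun n m C G M \<theta> =
     (let \<psi> = circuit_state n C G m \<theta>
      in Re (\<Sum>i<2 ^ n. cnj (\<psi> $ i) * ((M *\<^sub>v \<psi>) $ i)))"

definition Ktilde :: "nat \<Rightarrow> (nat \<Rightarrow> real) \<Rightarrow> (nat \<Rightarrow> real) \<Rightarrow> real" where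
  "Ktilde m x z = (\<Prod>j\<in>{1..m}. (1 + 2 * cos (x j - z j)) / 3)"

definition qgrid :: "nat \<Rightarrow> nat \<Rightarrow> (nat \<Rightarrow> real) set" where
  "qgrid m L = {q. (\<forall>j\<in>{1..m}. q j \<in> {- 2 * pi / 3, 0, 2 * pi / 3}) \<and>
                  (\<forall>j. j \<notin> {1..m} \<longrightarrow> q j = 0) \<and>
                  card {j\<in>{1..m}. q j \<noteq> 0} \<le> L}"

definition ftilde :: "((nat \<Rightarrow> real) \<Rightarrow> real) \<Rightarrow> nat \<Rightarrow> nat \<Rightarrow> (nat \<Rightarrow> real)
    \<Rightarrow> (nat \<Rightarrow> real) \<Rightarrow> real" where
  "ftilde f m L p \<theta> = (\<Sum>q\<in>qgrid m L. f (\<lambda>j. p j + q j) * Ktilde m q (\<lambda>j. \<theta> j - p j))"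

definition partial :: "nat \<Rightarrow> ((nat \<Rightarrow> real) \<Rightarrow> real) \<Rightarrow> (nat \<Rightarrow> real) \<Rightarrow> real" where
  "partial j g x = deriv (\<lambda>t. g (x(j := t))) (x j)"

definition Dmulti :: "nat \<Rightarrow> (nat \<Rightarrow> nat) \<Rightarrow> ((nat \<Rightarrow> real) \<Rightarrow> real) \<Rightarrow> (nat \<Rightarrow> real) \<Rightarrow> real" where
  "Dmulti m \<alpha> g = foldr (\<lambda>j h. (partial j ^^ \<alpha> j) h) [1..<m+1] g"

end

theory Submission
  imports Defs
    "Jordan_Normal_Form.Jordan_Normal_Form_Existence"
    "Jordan_Normal_Form.Jordan_Normal_Form_Uniqueness"
begin

(*
  Along each coordinate the circuit state is e^{-i t/2} u + e^{i t/2} w, because each generator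
  is an involution (a Hermitian matrix with spectrum {-1, 1} has only 1x1 Jordan blocks); hence f is
  separately a trigonometric polynomial a + b cos t + c sin t in every variable. Such a polynomial is
  reproduced exactly by interpolation at the three nodes 0, +-2pi/3 with the kernel (1 + 2 cos u)/3,
  which is 1 at 0 and vanishes at the other two nodes. At p + v with v supported on S, |S| <= L, the
  kernel kills every grid point with a non-zero entry outside S, and what remains is the tensor
  interpolation over S, which is exact: this is (ii). So f - f~ vanishes on every coordinate slice
  through p spanned by at most L coordinates, and a derivative of order |alpha| <= L only moves
  along such a slice: this is (iii). Part (i) counts supports (m choose k) and signs 2^k.
*)

no_notation vec_nth (infixl \<open>$\<close> 90)

definition trig_deg1 :: "(real \<Rightarrow> real) \<Rightarrow> bool" where
  "trig_deg1 h \<longleftrightarrow> (\<exists>a b c. \<forall>t. h t = a + b * cos t + c * sin t)"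

definition trig_nodes :: "real set" where
  "trig_nodes = {- 2 * pi / 3, 0, 2 * pi / 3}"

definition trig_kernel :: "real \<Rightarrow> real" where
  "trig_kernel u = (1 + 2 * cos u) / 3"

lemma finite_trig_nodes: "finite trig_nodes"
  unfolding trig_nodes_def by simp

lemma trig_kernel_0: "trig_kernel 0 = 1"
  unfolding trig_kernel_def by simp

lemma zero_in_trig_nodes: "0 \<in> trig_nodes"
  unfolding trig_nodes_def by (intro insertI2 insertI1)

lemma trig_kernel_nodes:
  assumes "s \<in> trig_nodes" "s \<noteq> 0"
  shows "trig_kernel s = 0"
proof -
  have "s = 2 * pi / 3 \<or> s = - (2 * pi / 3)"
    using assms unfolding trig_nodes_def by auto
  then have "cos s = cos (2 * pi / 3)"
    by (metis cos_minus)
  then show ?thesis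
    unfolding trig_kernel_def by (simp add: cos_120)
qed

lemma trig_deg1_interpolation:
  assumes "trig_deg1 h"
  shows "h (x + u) = (\<Sum>s\<in>trig_nodes. h (x + s) * trig_kernel (s - u))"
proof -
  obtain a b d where h: "\<And>t. h t = a + b * cos t + d * sin t"
    using assms unfolding trig_deg1_def by blast
  define c :: real where "c = 2 * pi / 3"
  have nodes: "trig_nodes = {0, c, - c}" and "c \<noteq> 0" "c \<noteq> - c"
    unfolding trig_nodes_def c_def by auto
  have cs: "cos c = - 1 / 2" "sin c = sqrt 3 / 2"
    unfolding c_def using sin_pi_minus[of "pi / 3"] by (simp_all add: cos_120 sin_60)
  show ?thesis
    unfolding nodes h trig_kernel_def using \<open>c \<noteq> 0\<close> \<open>c \<noteq> - c\<close>
    by (simp add: cos_add sin_add cos_diff sin_diff cs) (simp add: field_simps)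
qed

definition grid :: "'i set \<Rightarrow> 'a::zero set \<Rightarrow> ('i \<Rightarrow> 'a) set" where
  "grid T V = {q. (\<forall>i\<in>T. q i \<in> V) \<and> (\<forall>i. i \<notin> T \<longrightarrow> q i = 0)}"

lemma grid_empty: "grid {} V = {\<lambda>_. 0}"
  unfolding grid_def by auto

lemma grid_insert:
  assumes "j \<notin> T"
  shows "grid (insert j T) V = (\<lambda>(q, s). q(j := s)) ` (grid T V \<times> V)"
proof (intro equalityI subsetI)
  fix q assume q: "q \<in> grid (insert j T) V"
  then have "(q(j := 0), q j) \<in> grid T V \<times> V"
    using assms unfolding grid_def by auto
  moreover have "q = (\<lambda>(q, s). q(j := s)) (q(j := 0), q j)"
    by simp
  ultimately show "q \<in> (\<lambda>(q, s). q(j := s)) ` (grid T V \<times> V)"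
    by blast
qed (use assms in \<open>auto simp: grid_def\<close>)

lemma inj_on_grid_insert:
  assumes "j \<notin> T"
  shows "inj_on (\<lambda>(q, s). q(j := s)) (grid T V \<times> V)"
proof (rule inj_onI, clarify)
  fix q s q' s'
  assume "q \<in> grid T V" "q' \<in> grid T V" and eq: "q(j := s) = q'(j := s')"
  then have "q j = 0" "q' j = 0"
    using assms unfolding grid_def by auto
  moreover from eq have "s = s'"
    by (metis fun_upd_same)
  ultimately show "q = q' \<and> s = s'"
    using eq by (metis fun_upd_triv fun_upd_upd)
qed

lemma finite_grid: "finite T \<Longrightarrow> finite V \<Longrightarrow> finite (grid T V)"
  by (induction T rule: finite_induct) (simp_all add: grid_empty grid_insert)

lemma card_grid: "finite T \<Longrightarrow> finite V \<Longrightarrow> card (grid T V) = card V ^ card T"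
proof (induction T rule: finite_induct)
  case (insert j T)
  have "card (grid (insert j T) V) = card (grid T V \<times> V)"
    unfolding grid_insert[OF insert(2)] by (rule card_image[OF inj_on_grid_insert[OF insert(2)]])
  with insert show ?case
    by (simp add: card_cartesian_product)
qed (simp add: grid_empty)

lemma grid_mono: "S \<subseteq> T \<Longrightarrow> V' \<subseteq> V \<Longrightarrow> 0 \<in> V \<Longrightarrow> grid S V' \<subseteq> grid T V"
  unfolding grid_def by auto

lemma grid_nonzero_support: "q \<in> grid T (V - {0}) \<Longrightarrow> {i. q i \<noteq> 0} = T"
  unfolding grid_def by auto

lemma grid_restrict_support: "q \<in> grid T V \<Longrightarrow> q \<in> grid {i\<in>T. q i \<noteq> 0} (V - {0})"
  unfolding grid_def by auto

definition trig_deg1_in :: "'i set \<Rightarrow> (('i \<Rightarrow> real) \<Rightarrow> real) \<Rightarrow> bool" where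
  "trig_deg1_in S h \<longleftrightarrow> (\<forall>j\<in>S. \<forall>w. trig_deg1 (\<lambda>t. h (w(j := t))))"

lemma trig_deg1_in_subset: "trig_deg1_in T h \<Longrightarrow> S \<subseteq> T \<Longrightarrow> trig_deg1_in S h"
  unfolding trig_deg1_in_def by blast

lemma trig_deg1_in_interpolation:
  assumes "finite S" and "trig_deg1_in S h"
  shows "h w = (\<Sum>q\<in>grid S trig_nodes. h (\<lambda>i. if i \<in> S then p i + q i else w i)
                  * (\<Prod>i\<in>S. trig_kernel (q i - (w i - p i))))"
  using assms
proof (induction S arbitrary: w rule: finite_induct)
  case empty
  then show ?case by (simp add: grid_empty)
next
  case (insert j S w)
  let ?upd = "\<lambda>S q i. if i \<in> S then p i + q i else w i"
  let ?K = "\<lambda>S q. \<Prod>i\<in>S. trig_kernel (q i - (w i - p i))"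
  have step: "h (?upd S q) = (\<Sum>s\<in>trig_nodes. h (?upd (insert j S) (q(j := s))) * trig_kernel (s - (w j - p j)))"
    for q
  proof -
    have "trig_deg1 (\<lambda>t. h ((?upd S q)(j := t)))"
      using insert.prems unfolding trig_deg1_in_def by blast
    from trig_deg1_interpolation[OF this, of "p j" "w j - p j"]
    have "h ((?upd S q)(j := w j)) = (\<Sum>s\<in>trig_nodes. h ((?upd S q)(j := p j + s)) * trig_kernel (s - (w j - p j)))"
      by simp
    moreover have "(?upd S q)(j := w j) = ?upd S q"
      "(?upd S q)(j := p j + s) = ?upd (insert j S) (q(j := s))" for s
      using insert(2) by (auto simp: fun_eq_iff)
    ultimately show ?thesis by simp
  qed
  have kernel: "?K (insert j S) (q(j := s)) = trig_kernel (s - (w j - p j)) * ?K S q" for q s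
  proof -
    have "?K S (q(j := s)) = ?K S q"
      using insert(2) by (intro prod.cong) auto
    then show ?thesis
      using insert(1,2) by simp
  qed
  have "trig_deg1_in S h"
    using insert.prems by (rule trig_deg1_in_subset) blast
  have "h w = (\<Sum>q\<in>grid S trig_nodes. \<Sum>s\<in>trig_nodes.
                 h (?upd (insert j S) (q(j := s))) * ?K (insert j S) (q(j := s)))"
    by (subst insert.IH[OF \<open>trig_deg1_in S h\<close>]) (simp only: step kernel sum_distrib_right mult.assoc)
  also have "\<dots> = (\<Sum>q\<in>grid (insert j S) trig_nodes. h (?upd (insert j S) q) * ?K (insert j S) q)"
    unfolding grid_insert[OF insert(2)] sum.reindex[OF inj_on_grid_insert[OF insert(2)]]
    by (simp add: sum.cartesian_product split_def)
  finally show ?case .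
qed

lemma qgrid_eq_grid: "qgrid m L = {q \<in> grid {1..m} trig_nodes. card {j\<in>{1..m}. q j \<noteq> 0} \<le> L}"
  unfolding qgrid_def grid_def trig_nodes_def by auto

lemma finite_qgrid: "finite (qgrid m L)"
  unfolding qgrid_eq_grid using finite_grid[OF _ finite_trig_nodes, of "{1..m}"] by simp

lemma Ktilde_eq_prod_trig_kernel: "Ktilde m x z = (\<Prod>j\<in>{1..m}. trig_kernel (x j - z j))"
  unfolding Ktilde_def trig_kernel_def ..

lemma Ktilde_eq_0:
  assumes "q \<in> grid {1..m} trig_nodes" "i \<in> {1..m}" "q i \<noteq> 0" "z i = 0"
  shows "Ktilde m q z = 0"
proof -
  have "trig_kernel (q i - z i) = 0"
    using assms by (intro trig_kernel_nodes) (auto simp: grid_def)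
  then show ?thesis
    unfolding Ktilde_eq_prod_trig_kernel using assms(2) by (intro prod_zero) auto
qed

lemma Ktilde_eq_prod_support:
  assumes "S \<subseteq> {1..m}" "q \<in> grid S trig_nodes" "\<forall>i\<in>{1..m} - S. z i = 0"
  shows "Ktilde m q z = (\<Prod>i\<in>S. trig_kernel (q i - z i))"
  unfolding Ktilde_eq_prod_trig_kernel
  by (rule prod.mono_neutral_right) (use assms in \<open>auto simp: grid_def trig_kernel_0\<close>)

lemma ftilde_eq_on_sparse:
  assumes trig: "trig_deg1_in {1..m} f"
    and coords: "\<And>\<theta> \<theta>'. \<forall>i\<in>{1..m}. \<theta> i = \<theta>' i \<Longrightarrow> f \<theta> = f \<theta>'"
    and sparse: "card {j\<in>{1..m}. v j \<noteq> 0} \<le> L"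
  shows "ftilde f m L p (\<lambda>j. p j + v j) = f (\<lambda>j. p j + v j)"
proof -
  define S where "S = {j\<in>{1..m}. v j \<noteq> 0}"
  have S: "S \<subseteq> {1..m}" "finite S" and v: "\<forall>i\<in>{1..m} - S. v i = 0"
    unfolding S_def by auto
  have sub: "grid S trig_nodes \<subseteq> qgrid m L"
  proof
    fix q assume q: "q \<in> grid S trig_nodes"
    have "card {j\<in>{1..m}. q j \<noteq> 0} \<le> card S"
      using q S by (intro card_mono) (auto simp: grid_def)
    moreover have "q \<in> grid {1..m} trig_nodes"
      using q grid_mono[OF S(1) order_refl zero_in_trig_nodes] by (rule rev_subsetD)
    ultimately show "q \<in> qgrid m L"
      using sparse unfolding qgrid_eq_grid S_def by simp
  qed
  have "ftilde f m L p (\<lambda>j. p j + v j) = (\<Sum>q\<in>qgrid m L. f (\<lambda>j. p j + q j) * Ktilde m q v)"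
    unfolding ftilde_def by simp
  also have "\<dots> = (\<Sum>q\<in>grid S trig_nodes. f (\<lambda>j. p j + q j) * Ktilde m q v)"
  proof (rule sum.mono_neutral_right[OF finite_qgrid sub])
    show "\<forall>q\<in>qgrid m L - grid S trig_nodes. f (\<lambda>j. p j + q j) * Ktilde m q v = 0"
    proof
      fix q assume q: "q \<in> qgrid m L - grid S trig_nodes"
      then have "q \<in> grid {1..m} trig_nodes"
        unfolding qgrid_eq_grid by auto
      moreover obtain i where "i \<in> {1..m} - S" "q i \<noteq> 0"
        using q S unfolding qgrid_eq_grid grid_def by auto
      ultimately show "f (\<lambda>j. p j + q j) * Ktilde m q v = 0"
        using v Ktilde_eq_0 by auto
    qed
  qed
  also have "\<dots> = (\<Sum>q\<in>grid S trig_nodes. f (\<lambda>i. if i \<in> S then p i + q i else p i + v i)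
                  * (\<Prod>i\<in>S. trig_kernel (q i - (p i + v i - p i))))"
  proof (rule sum.cong[OF refl])
    fix q assume q: "q \<in> grid S trig_nodes"
    have "f (\<lambda>j. p j + q j) = f (\<lambda>i. if i \<in> S then p i + q i else p i + v i)"
      using q v by (intro coords) (auto simp: grid_def)
    then show "f (\<lambda>j. p j + q j) * Ktilde m q v = f (\<lambda>i. if i \<in> S then p i + q i else p i + v i)
                  * (\<Prod>i\<in>S. trig_kernel (q i - (p i + v i - p i)))"
      using Ktilde_eq_prod_support[OF S(1) q v] by simp
  qed
  also have "\<dots> = f (\<lambda>j. p j + v j)"
    by (rule trig_deg1_in_interpolation[symmetric, OF S(2) trig_deg1_in_subset[OF trig S(1)]])
  finally show ?thesis .
qed

lemma card_nonzero_trig_nodes: "card (trig_nodes - {0}) = 2"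
proof -
  define c :: real where "c = 2 * pi / 3"
  have "c > 0" "- 2 * pi / 3 = - c"
    unfolding c_def by simp_all
  then have "trig_nodes - {0} = {- c, c}" "- c \<noteq> c"
    unfolding trig_nodes_def c_def[symmetric] by auto
  then show ?thesis
    by simp
qed

lemma qgrid_eq_Union_grid:
  "qgrid m L = (\<Union>T\<in>{T. T \<subseteq> {1..m} \<and> card T \<le> L}. grid T (trig_nodes - {0}))"
proof (intro equalityI subsetI)
  fix q assume "q \<in> qgrid m L"
  then have q: "q \<in> grid {1..m} trig_nodes" "card {i\<in>{1..m}. q i \<noteq> 0} \<le> L"
    unfolding qgrid_eq_grid by simp_all
  have "{i\<in>{1..m}. q i \<noteq> 0} \<in> {T. T \<subseteq> {1..m} \<and> card T \<le> L}"
    using q(2) by auto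
  with grid_restrict_support[OF q(1)]
  show "q \<in> (\<Union>T\<in>{T. T \<subseteq> {1..m} \<and> card T \<le> L}. grid T (trig_nodes - {0}))"
    by (rule UN_I[rotated])
next
  fix q assume "q \<in> (\<Union>T\<in>{T. T \<subseteq> {1..m} \<and> card T \<le> L}. grid T (trig_nodes - {0}))"
  then obtain T where T: "T \<subseteq> {1..m}" "card T \<le> L" and q: "q \<in> grid T (trig_nodes - {0})"
    by (auto elim!: UN_E)
  have "grid T (trig_nodes - {0}) \<subseteq> grid {1..m} trig_nodes"
    using T(1) by (rule grid_mono) (simp_all add: zero_in_trig_nodes)
  with q have "q \<in> grid {1..m} trig_nodes"
    by (rule rev_subsetD)
  moreover have "{i\<in>{1..m}. q i \<noteq> 0} = T"
    using grid_nonzero_support[OF q] T(1) by blast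
  ultimately show "q \<in> qgrid m L"
    unfolding qgrid_eq_grid using T(2) by simp
qed

lemma card_qgrid: "card (qgrid m L) = (\<Sum>k\<le>L. 2 ^ k * (m choose k))"
proof -
  define subsets where "subsets k = {T. T \<subseteq> {1..m} \<and> card T = k}" for k
  let ?grid = "\<lambda>T :: nat set. grid T (trig_nodes - {0})"
  have disjoint: "?grid T \<inter> ?grid T' = {}" if "T \<noteq> T'" for T T'
    using grid_nonzero_support that by blast
  have card_grid_T: "card (?grid T) = 2 ^ card T" if "T \<subseteq> {1..m}" for T
    using finite_subset[OF that] finite_trig_nodes
    by (simp add: card_grid card_nonzero_trig_nodes)
  have "{T. T \<subseteq> {1..m} \<and> card T \<le> L} = (\<Union>k\<le>L. subsets k)"
    unfolding subsets_def by auto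
  then have "card (qgrid m L) = card (\<Union>T\<in>(\<Union>k\<le>L. subsets k). ?grid T)"
    unfolding qgrid_eq_Union_grid by simp
  also have "\<dots> = (\<Sum>T\<in>(\<Union>k\<le>L. subsets k). card (?grid T))"
    by (rule card_UN_disjoint)
      (use disjoint in \<open>auto simp: subsets_def intro!: finite_grid finite_trig_nodes intro: finite_subset\<close>)
  also have "\<dots> = (\<Sum>k\<le>L. \<Sum>T\<in>subsets k. 2 ^ card T)"
    by (subst sum.UNION_disjoint) (auto simp: subsets_def card_grid_T)
  also have "\<dots> = (\<Sum>k\<le>L. 2 ^ k * (m choose k))"
    using n_subsets[of "{1..m}"] by (simp add: subsets_def mult.commute)
  finally show ?thesis .
qed

definition coord_slice :: "'i set \<Rightarrow> ('i \<Rightarrow> real) \<Rightarrow> ('i \<Rightarrow> real) set" where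
  "coord_slice S p = {x. \<forall>i. i \<notin> S \<longrightarrow> x i = p i}"

(* No differentiability is needed: along a coordinate line inside the slice h is identically 0. *)
lemma partial_funpow_eq_0_on_slice:
  assumes "\<forall>x\<in>coord_slice S p. h x = 0" and "k = 0 \<or> j \<in> S"
  shows "\<forall>x\<in>coord_slice S p. (partial j ^^ k) h x = 0"
  using assms(2)
proof (induction k)
  case (Suc k)
  then have "j \<in> S" by simp
  show ?case
  proof
    fix x assume "x \<in> coord_slice S p"
    then have "\<forall>t. x(j := t) \<in> coord_slice S p"
      using \<open>j \<in> S\<close> unfolding coord_slice_def by auto
    then have "(\<lambda>t. (partial j ^^ k) h (x(j := t))) = (\<lambda>_. 0)"
      using Suc.IH \<open>j \<in> S\<close> by auto
    then show "(partial j ^^ Suc k) h x = 0"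
      unfolding partial_def by simp
  qed
qed (use assms(1) in simp)

lemma Dmulti_eq_0_on_slice:
  assumes "\<forall>x\<in>coord_slice S p. g x = 0" and "\<forall>j\<in>{1..m}. 0 < \<alpha> j \<longrightarrow> j \<in> S"
  shows "Dmulti m \<alpha> g p = 0"
proof -
  have vanish: "\<forall>x\<in>coord_slice S p. foldr (\<lambda>j h. (partial j ^^ \<alpha> j) h) js g x = 0"
    if "set js \<subseteq> {1..m}" for js
    using that
  proof (induction js)
    case (Cons j js)
    then have "\<forall>x\<in>coord_slice S p. foldr (\<lambda>j h. (partial j ^^ \<alpha> j) h) js g x = 0"
      and "\<alpha> j = 0 \<or> j \<in> S"
      using assms(2) by auto
    from partial_funpow_eq_0_on_slice[OF this] show ?case
      by simp
  qed (use assms(1) in simp)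
  have "p \<in> coord_slice S p"
    unfolding coord_slice_def by simp
  moreover have "set [1..<m+1] \<subseteq> {1..m}"
    by auto
  ultimately show ?thesis
    unfolding Dmulti_def using vanish by blast
qed

lemma Dmulti_ftilde_eq_0:
  assumes trig: "trig_deg1_in {1..m} f"
    and coords: "\<And>\<theta> \<theta>'. \<forall>i\<in>{1..m}. \<theta> i = \<theta>' i \<Longrightarrow> f \<theta> = f \<theta>'"
    and order: "(\<Sum>j\<in>{1..m}. \<alpha> j) \<le> L"
  shows "Dmulti m \<alpha> (\<lambda>\<theta>. f \<theta> - ftilde f m L p \<theta>) p = 0"
proof (rule Dmulti_eq_0_on_slice)
  define S where "S = {j\<in>{1..m}. 0 < \<alpha> j}"
  show "\<forall>j\<in>{1..m}. 0 < \<alpha> j \<longrightarrow> j \<in> S"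
    unfolding S_def by simp
  have "card S = (\<Sum>j\<in>S. 1)"
    by simp
  also have "\<dots> \<le> (\<Sum>j\<in>S. \<alpha> j)"
    unfolding S_def by (intro sum_mono) auto
  also have "\<dots> \<le> (\<Sum>j\<in>{1..m}. \<alpha> j)"
    unfolding S_def by (intro sum_mono2) auto
  also have "\<dots> \<le> L"
    by (rule order)
  finally have "card S \<le> L" .
  show "\<forall>x\<in>coord_slice S p. f x - ftilde f m L p x = 0"
  proof
    fix x assume "x \<in> coord_slice S p"
    then have "{j\<in>{1..m}. x j - p j \<noteq> 0} \<subseteq> S"
      unfolding coord_slice_def by auto
    then have "card {j\<in>{1..m}. x j - p j \<noteq> 0} \<le> card S"
      by (rule card_mono[rotated]) (simp add: S_def)
    then have "card {j\<in>{1..m}. x j - p j \<noteq> 0} \<le> L"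
      using \<open>card S \<le> L\<close> by simp
    from ftilde_eq_on_sparse[OF trig coords this, of p]
    show "f x - ftilde f m L p x = 0"
      by simp
  qed
qed

lemma hermitian_mat_index:
  assumes "hermitian_mat N A" "i < N" "j < N"
  shows "A $$ (i, j) = cnj (A $$ (j, i))"
proof -
  have "A \<in> carrier_mat N N" "adj A = A"
    using assms(1) unfolding hermitian_mat_def by auto
  then have "A $$ (i, j) = adj A $$ (i, j)"
    by simp
  also have "\<dots> = cnj (A $$ (j, i))"
    unfolding adj_def using \<open>A \<in> carrier_mat N N\<close> assms(2,3) by simp
  finally show ?thesis .
qed

lemma hermitian_char_matrix:
  assumes "hermitian_mat N A" "cnj a = a"
  shows "hermitian_mat N (char_matrix A a)"
proof -
  have A: "A \<in> carrier_mat N N"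
    using assms(1) unfolding hermitian_mat_def by auto
  have "adj (char_matrix A a) = char_matrix A a"
  proof (rule eq_matI)
    fix i j assume "i < dim_row (char_matrix A a)" "j < dim_col (char_matrix A a)"
    then have ij: "i < N" "j < N"
      using A by (simp_all add: char_matrix_def)
    show "adj (char_matrix A a) $$ (i, j) = char_matrix A a $$ (i, j)"
      using A ij assms(2) hermitian_mat_index[OF assms(1) ij, symmetric]
      by (simp add: adj_def char_matrix_def)
  qed (use A in \<open>simp_all add: adj_def char_matrix_def\<close>)
  then show ?thesis
    using A unfolding hermitian_mat_def by simp
qed

lemma mult_mat_vec_index_sum:
  "A \<in> carrier_mat N N \<Longrightarrow> v \<in> carrier_vec N \<Longrightarrow> i < N \<Longrightarrow> (A *\<^sub>v v) $ i = (\<Sum>l<N. A $$ (i, l) * v $ l)"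
  by (simp add: scalar_prod_def lessThan_atLeast0)

lemma hermitian_form_swap:
  assumes H: "hermitian_mat N H" and x: "x \<in> carrier_vec N" and v: "v \<in> carrier_vec N"
  shows "(\<Sum>i<N. cnj (x $ i) * (H *\<^sub>v v) $ i) = (\<Sum>l<N. cnj ((H *\<^sub>v x) $ l) * v $ l)"
proof -
  have Hc: "H \<in> carrier_mat N N"
    using H unfolding hermitian_mat_def by auto
  have "(\<Sum>i<N. cnj (x $ i) * (H *\<^sub>v v) $ i) = (\<Sum>i<N. \<Sum>l<N. cnj (x $ i) * H $$ (i, l) * v $ l)"
    by (rule sum.cong[OF refl])
      (simp add: mult_mat_vec_index_sum[OF Hc v] sum_distrib_left mult.assoc del: index_mult_mat_vec)
  also have "\<dots> = (\<Sum>l<N. \<Sum>i<N. cnj (H $$ (l, i) * x $ i) * v $ l)"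
    by (subst sum.swap, intro sum.cong refl) (simp add: hermitian_mat_index[OF H, symmetric])
  also have "\<dots> = (\<Sum>l<N. cnj ((H *\<^sub>v x) $ l) * v $ l)"
    by (rule sum.cong[OF refl])
      (simp add: mult_mat_vec_index_sum[OF Hc x] cnj_sum sum_distrib_right del: index_mult_mat_vec)
  finally show ?thesis .
qed

lemma hermitian_mult_mat_vec_square_eq_0:
  assumes H: "hermitian_mat N H" and v: "v \<in> carrier_vec N" and HHv: "H *\<^sub>v (H *\<^sub>v v) = 0\<^sub>v N"
  shows "H *\<^sub>v v = 0\<^sub>v N"
proof -
  define x where "x = H *\<^sub>v v"
  have x: "x \<in> carrier_vec N"
    using H v unfolding x_def hermitian_mat_def by auto
  have "x \<bullet>c x = (\<Sum>i<N. cnj (x $ i) * x $ i)"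
    using x by (simp add: scalar_prod_def lessThan_atLeast0 mult.commute)
  also have "\<dots> = (\<Sum>i<N. cnj (x $ i) * (H *\<^sub>v v) $ i)"
    by (simp only: x_def)
  also have "\<dots> = (\<Sum>l<N. cnj ((H *\<^sub>v x) $ l) * v $ l)"
    by (rule hermitian_form_swap[OF H x v])
  also have "\<dots> = 0"
    using HHv by (simp add: x_def)
  finally show ?thesis
    using conjugate_square_eq_0_vec[OF x] unfolding x_def by simp
qed

lemma jordan_nf_block_size_pos: "jordan_nf A n_as \<Longrightarrow> (k, a) \<in> set n_as \<Longrightarrow> 0 < k"
  unfolding jordan_nf_def by (metis fst_conv gr0I image_eqI)

lemma jordan_nf_block_eigenvalue:
  fixes A :: "'a :: field mat"
  assumes A: "A \<in> carrier_mat n n" and jnf: "jordan_nf A n_as" and ka: "(k, a) \<in> set n_as"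
  shows "eigenvalue A a"
proof -
  have "k \<in> set (map fst (filter (\<lambda>na. snd na = a) n_as))"
    using ka by force
  then have "k \<le> Polynomial.order a (char_poly A)"
    unfolding jordan_nf_order[OF jnf] by (rule member_le_sum_list) simp_all
  then have "Polynomial.order a (char_poly A) \<noteq> 0"
    using jordan_nf_block_size_pos[OF jnf ka] by linarith
  moreover have "char_poly A \<noteq> 0"
    using degree_monic_char_poly[OF A] by auto
  ultimately have "poly (char_poly A) a = 0"
    by (simp add: order_root)
  then show ?thesis
    using eigenvalue_root_char_poly[OF A] by simp
qed

lemma hermitian_jordan_block_size:
  assumes H: "hermitian_mat N G" and jnf: "jordan_nf G n_as" and ka: "(k, a) \<in> set n_as"
    and real: "cnj a = a"
  shows "k = 1"
proof -
  let ?H = "char_matrix G a"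
  let ?sizes = "map fst [(n, e)\<leftarrow>n_as . e = a]"
  have G: "G \<in> carrier_mat N N"
    using H unfolding hermitian_mat_def by simp
  have H': "hermitian_mat N ?H" and Hc: "?H \<in> carrier_mat N N"
    using hermitian_char_matrix[OF H real] G by auto
  have "mat_kernel (?H ^\<^sub>m 2) = mat_kernel (?H ^\<^sub>m 1)"
    using Hc hermitian_mult_mat_vec_square_eq_0[OF H']
    by (auto simp: mat_kernel_def numeral_2_eq_2 assoc_mult_mat_vec[of _ N N _ N])
  then have "dim_gen_eigenspace G a 2 = dim_gen_eigenspace G a 1"
    unfolding dim_gen_eigenspace_def kernel_dim_def using Hc by simp
  \<comment> \<open>\<open>dim ker (G - a)^k\<close> is the sum of \<open>min k n\<close> over the sizes \<open>n\<close> of the blocks for \<open>a\<close>\<close>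
  then have sizes: "(\<Sum>n\<leftarrow>?sizes. min 2 n) = (\<Sum>n\<leftarrow>?sizes. min 1 n)"
    unfolding dim_gen_eigenspace[OF jnf] .
  have split: "(\<Sum>n\<leftarrow>ns. min 2 n) = (\<Sum>n\<leftarrow>ns. min 1 n) + (\<Sum>n\<leftarrow>ns. min 2 n - min 1 n)"
    for ns :: "nat list"
    by (induction ns) auto
  have "(\<Sum>n\<leftarrow>?sizes. min 2 n - min 1 n) = 0"
    using sizes split[of ?sizes] by linarith
  moreover have "min 2 k - min 1 k \<le> (\<Sum>n\<leftarrow>?sizes. min 2 n - min 1 n)"
    by (rule member_le_sum_list) (use ka in force)+
  ultimately have "min 2 k - min 1 k = 0"
    by linarith
  then show "k = 1"
    using jordan_nf_block_size_pos[OF jnf ka] by (auto simp: min_def split: if_splits)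
qed

lemma hermitian_involution:
  assumes H: "hermitian_mat N G" and spec: "\<And>k. eigenvalue G k \<Longrightarrow> k = -1 \<or> k = 1"
  shows "G * G = 1\<^sub>m N"
proof -
  have G: "G \<in> carrier_mat N N"
    using H unfolding hermitian_mat_def by simp
  obtain n_as where jnf: "jordan_nf G n_as"
    using char_poly_factorized[OF G] jordan_nf_exists[OF G] by blast
  obtain P Q where "\<And>k. G ^\<^sub>m k = P * jordan_matrix n_as ^\<^sub>m k * Q"
    using jordan_nf_powE[OF G jnf] by blast
  moreover have "jordan_block k a ^\<^sub>m 2 = jordan_block k a ^\<^sub>m 0" if "(k, a) \<in> set n_as" for k a
  proof -
    have "a = -1 \<or> a = 1"
      using spec jordan_nf_block_eigenvalue[OF G jnf that] by blast
    moreover have "k = 1"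
      using hermitian_jordan_block_size[OF H jnf that] \<open>a = -1 \<or> a = 1\<close> by auto
    ultimately show ?thesis
      by (intro eq_matI) (auto simp: numeral_2_eq_2 scalar_prod_def)
  qed
  then have "jordan_matrix n_as ^\<^sub>m 2 = jordan_matrix n_as ^\<^sub>m 0"
    unfolding jordan_matrix_pow by (auto intro!: arg_cong[where f = diag_block_mat])
  ultimately have "G ^\<^sub>m 2 = G ^\<^sub>m 0"
    by metis
  then show ?thesis
    using G by (simp add: numeral_2_eq_2)
qed

lemma mult_mat_vec_lincomb:
  fixes A :: "'a::field mat"
  assumes "A \<in> carrier_mat nr n" "u \<in> carrier_vec n" "w \<in> carrier_vec n"
  shows "A *\<^sub>v (a \<cdot>\<^sub>v u + b \<cdot>\<^sub>v w) = a \<cdot>\<^sub>v (A *\<^sub>v u) + b \<cdot>\<^sub>v (A *\<^sub>v w)"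
  using assms by (simp add: mult_add_distrib_mat_vec mult_mat_vec)

lemma smult_mat_mult_vec:
  fixes A :: "'a::comm_ring mat"
  assumes "A \<in> carrier_mat nr nc" "v \<in> carrier_vec nc"
  shows "(k \<cdot>\<^sub>m A) *\<^sub>v v = k \<cdot>\<^sub>v (A *\<^sub>v v)"
proof (rule eq_vecI)
  fix i assume "i < dim_vec (k \<cdot>\<^sub>v (A *\<^sub>v v))"
  then have "row A i \<in> carrier_vec nc" "i < nr"
    using assms by auto
  then show "((k \<cdot>\<^sub>m A) *\<^sub>v v) $ i = (k \<cdot>\<^sub>v (A *\<^sub>v v)) $ i"
    using assms smult_scalar_prod_distrib[OF \<open>row A i \<in> carrier_vec nc\<close> assms(2)] by simp
qed (use assms in simp)

lemma smult_smult_mat: "a \<cdot>\<^sub>m (b \<cdot>\<^sub>m A) = (a * b :: 'a :: semigroup_mult) \<cdot>\<^sub>m A"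
  by (intro eq_matI) (auto simp: mult.assoc)

lemma power_smult_involution:
  fixes G :: "'a::comm_ring_1 mat"
  assumes G: "G \<in> carrier_mat N N" and GG: "G * G = 1\<^sub>m N"
  shows "(c \<cdot>\<^sub>m G) ^\<^sub>m k = c ^ k \<cdot>\<^sub>m (if even k then 1\<^sub>m N else G)"
proof (induction k)
  case 0
  show ?case using G by (intro eq_matI) auto
next
  case (Suc k)
  have "(c \<cdot>\<^sub>m G) ^\<^sub>m Suc k = c ^ k \<cdot>\<^sub>m (if even k then 1\<^sub>m N else G) * (c \<cdot>\<^sub>m G)"
    using Suc by simp
  also have "\<dots> = c ^ Suc k \<cdot>\<^sub>m ((if even k then 1\<^sub>m N else G) * G)"
    using G by (simp add: mult_smult_assoc_mat[of _ N N] mult_smult_distrib[of _ N N]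
        smult_smult_mat mult.commute)
  also have "(if even k then 1\<^sub>m N else G) * G = (if even (Suc k) then 1\<^sub>m N else G)"
    using G GG by auto
  finally show ?case .
qed

lemma exp_sums_complex: "(\<lambda>n. z ^ n / fact n) sums exp (z :: complex)"
  using exp_converges[of z] by (simp add: scaleR_conv_of_real divide_inverse mult.commute)

lemma exp_series_even_odd:
  fixes c x y :: complex
  shows "(\<lambda>k. c ^ k / fact k * (if even k then x else y))
           sums ((x + y) / 2 * exp c + (x - y) / 2 * exp (- c))"
proof -
  have "(\<lambda>k. (x + y) / 2 * (c ^ k / fact k) + (x - y) / 2 * ((- c) ^ k / fact k))
          sums ((x + y) / 2 * exp c + (x - y) / 2 * exp (- c))"
    by (intro sums_add sums_mult exp_sums_complex)
  moreover have "(x + y) / 2 * (c ^ k / fact k) + (x - y) / 2 * ((- c) ^ k / fact k)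
                   = c ^ k / fact k * (if even k then x else y)" for k
    by (cases "even k") (simp_all add: field_simps)
  ultimately show ?thesis by simp
qed

lemma rot_involution:
  assumes G: "G \<in> carrier_mat N N" and GG: "G * G = 1\<^sub>m N"
  shows "rot G t = cis (- (t / 2)) \<cdot>\<^sub>m ((1 / 2) \<cdot>\<^sub>m (1\<^sub>m N + G)) + cis (t / 2) \<cdot>\<^sub>m ((1 / 2) \<cdot>\<^sub>m (1\<^sub>m N - G))"
    (is "_ = ?R")
proof (rule eq_matI)
  fix i j assume "i < dim_row ?R" "j < dim_col ?R"
  then have ij: "i < N" "j < N"
    using G by auto
  let ?c = "- \<i> * complex_of_real (t / 2)"
  let ?x = "1\<^sub>m N $$ (i, j)" and ?y = "G $$ (i, j)"
  have "rot G t $$ (i, j) = (\<Sum>k. ?c ^ k / fact k * (if even k then ?x else ?y))"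
    unfolding rot_def mat_exp_def power_smult_involution[OF G GG] using ij G
    by (simp add: if_distrib[of "\<lambda>A. A $$ (i, j)"] cong: if_cong)
  also have "\<dots> = (?x + ?y) / 2 * exp ?c + (?x - ?y) / 2 * exp (- ?c)"
    by (rule sums_unique[symmetric, OF exp_series_even_odd])
  also have "\<dots> = ?R $$ (i, j)"
    using ij G by (simp add: cis_conv_exp field_simps)
  finally show "rot G t $$ (i, j) = ?R $$ (i, j)" .
qed (use G in \<open>simp_all add: rot_def mat_exp_def\<close>)

definition half_phase_curve :: "nat \<Rightarrow> (real \<Rightarrow> complex vec) \<Rightarrow> bool" where
  "half_phase_curve N \<phi> \<longleftrightarrow>
     (\<exists>u\<in>carrier_vec N. \<exists>w\<in>carrier_vec N. \<forall>t. \<phi> t = cis (- (t / 2)) \<cdot>\<^sub>v u + cis (t / 2) \<cdot>\<^sub>v w)"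

lemma half_phase_curve_mult:
  assumes A: "A \<in> carrier_mat N N" and "half_phase_curve N \<phi>"
  shows "half_phase_curve N (\<lambda>t. A *\<^sub>v \<phi> t)"
proof -
  obtain u w where uw: "u \<in> carrier_vec N" "w \<in> carrier_vec N"
    and \<phi>: "\<And>t. \<phi> t = cis (- (t / 2)) \<cdot>\<^sub>v u + cis (t / 2) \<cdot>\<^sub>v w"
    using assms(2) unfolding half_phase_curve_def by blast
  have "A *\<^sub>v \<phi> t = cis (- (t / 2)) \<cdot>\<^sub>v (A *\<^sub>v u) + cis (t / 2) \<cdot>\<^sub>v (A *\<^sub>v w)" for t
    unfolding \<phi> by (rule mult_mat_vec_lincomb[OF A uw])
  moreover have "A *\<^sub>v u \<in> carrier_vec N" "A *\<^sub>v w \<in> carrier_vec N"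
    using A uw by auto
  ultimately show ?thesis
    unfolding half_phase_curve_def by blast
qed

lemma half_phase_curve_rot:
  assumes G: "G \<in> carrier_mat N N" "G * G = 1\<^sub>m N" and s: "s \<in> carrier_vec N"
  shows "half_phase_curve N (\<lambda>t. rot G t *\<^sub>v s)"
proof -
  let ?P = "(1 / 2) \<cdot>\<^sub>m (1\<^sub>m N + G)" and ?Q = "(1 / 2) \<cdot>\<^sub>m (1\<^sub>m N - G)"
  have PQ: "?P \<in> carrier_mat N N" "?Q \<in> carrier_mat N N"
    using G by auto
  have "rot G t *\<^sub>v s = cis (- (t / 2)) \<cdot>\<^sub>v (?P *\<^sub>v s) + cis (t / 2) \<cdot>\<^sub>v (?Q *\<^sub>v s)" for t
    unfolding rot_involution[OF G]
    using PQ s by (simp add: add_mult_distrib_mat_vec[of _ N N] smult_mat_mult_vec[of _ N N])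
  moreover have "?P *\<^sub>v s \<in> carrier_vec N" "?Q *\<^sub>v s \<in> carrier_vec N"
    using PQ s by auto
  ultimately show ?thesis
    unfolding half_phase_curve_def by blast
qed

lemma trig_deg1_Re_cis: "trig_deg1 (\<lambda>t. Re (X + cis t * Y + cis (- t) * Z))"
  unfolding trig_deg1_def
proof (intro exI allI)
  fix t
  show "Re (X + cis t * Y + cis (- t) * Z) = Re X + (Re Y + Re Z) * cos t + (Im Z - Im Y) * sin t"
    by (simp add: algebra_simps)
qed

lemma expectation_half_phase_curve:
  assumes M: "M \<in> carrier_mat N N" and "half_phase_curve N \<phi>"
  shows "trig_deg1 (\<lambda>t. Re (\<Sum>i<N. cnj (\<phi> t $ i) * (M *\<^sub>v \<phi> t) $ i))"
proof -
  obtain u w where uw: "u \<in> carrier_vec N" "w \<in> carrier_vec N"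
    and \<phi>: "\<And>t. \<phi> t = cis (- (t / 2)) \<cdot>\<^sub>v u + cis (t / 2) \<cdot>\<^sub>v w"
    using assms(2) unfolding half_phase_curve_def by blast
  let ?X = "\<Sum>i<N. cnj (u $ i) * (M *\<^sub>v u) $ i + cnj (w $ i) * (M *\<^sub>v w) $ i"
  let ?Y = "\<Sum>i<N. cnj (u $ i) * (M *\<^sub>v w) $ i"
  let ?Z = "\<Sum>i<N. cnj (w $ i) * (M *\<^sub>v u) $ i"
  have "(\<Sum>i<N. cnj (\<phi> t $ i) * (M *\<^sub>v \<phi> t) $ i) = ?X + cis t * ?Y + cis (- t) * ?Z" for t
  proof -
    let ?a = "cis (- (t / 2))" and ?b = "cis (t / 2)"
    have phase: "cnj ?a * ?a = 1" "cnj ?b * ?b = 1" "cnj ?a * ?b = cis t" "cnj ?b * ?a = cis (- t)"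
      by (simp_all add: cis_cnj cis_mult)
    have M\<phi>: "M *\<^sub>v \<phi> t = ?a \<cdot>\<^sub>v (M *\<^sub>v u) + ?b \<cdot>\<^sub>v (M *\<^sub>v w)"
      unfolding \<phi> by (rule mult_mat_vec_lincomb[OF M uw])
    have "cnj (\<phi> t $ i) * (M *\<^sub>v \<phi> t) $ i
        = (cnj ?a * ?a) * (cnj (u $ i) * (M *\<^sub>v u) $ i) + (cnj ?b * ?b) * (cnj (w $ i) * (M *\<^sub>v w) $ i)
          + (cnj ?a * ?b) * (cnj (u $ i) * (M *\<^sub>v w) $ i) + (cnj ?b * ?a) * (cnj (w $ i) * (M *\<^sub>v u) $ i)"
      if "i < N" for i
      unfolding M\<phi> using that uw M by (simp add: \<phi> algebra_simps)
    then show ?thesis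
      unfolding phase by (simp add: sum.distrib sum_distrib_left)
  qed
  then show ?thesis
    using trig_deg1_Re_cis[of ?X ?Y ?Z] by simp
qed

lemma rot_carrier: "G \<in> carrier_mat N N \<Longrightarrow> rot G t \<in> carrier_mat N N"
  unfolding rot_def mat_exp_def carrier_mat_def by simp

lemma circuit_state_cong:
  "\<forall>i\<in>{1..k}. \<theta> i = \<theta>' i \<Longrightarrow> circuit_state n C G k \<theta> = circuit_state n C G k \<theta>'"
  by (induction k) auto

lemma qfun_cong:
  "\<forall>i\<in>{1..m}. \<theta> i = \<theta>' i \<Longrightarrow> qfun n m C G M \<theta> = qfun n m C G M \<theta>'"
  unfolding qfun_def using circuit_state_cong[of m \<theta> \<theta>'] by simp

context
  fixes n m :: nat and C G :: "nat \<Rightarrow> complex mat"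
  assumes C: "\<And>j. j \<in> {1..m+1} \<Longrightarrow> C j \<in> carrier_mat (2 ^ n) (2 ^ n)"
    and G: "\<And>j. j \<in> {1..m} \<Longrightarrow> G j \<in> carrier_mat (2 ^ n) (2 ^ n)"
begin

lemma circuit_state_carrier: "k \<le> m \<Longrightarrow> circuit_state n C G k \<theta> \<in> carrier_vec (2 ^ n)"
proof (induction k)
  case 0
  then show ?case
    using C[of 1] by (simp add: ket0_def)
next
  case (Suc k)
  then show ?case
    using C[of "k + 2"] rot_carrier[OF G[of "k + 1"]] by (auto intro!: mult_mat_vec_carrier)
qed

lemma circuit_state_half_phase_curve:
  assumes GG: "\<And>j. j \<in> {1..m} \<Longrightarrow> G j * G j = 1\<^sub>m (2 ^ n)"
    and j: "j \<in> {1..k}" and k: "k \<le> m"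
  shows "half_phase_curve (2 ^ n) (\<lambda>t. circuit_state n C G k (\<theta>(j := t)))"
  using j k
proof (induction k)
  case (Suc k)
  have Ck: "C (k + 2) \<in> carrier_mat (2 ^ n) (2 ^ n)"
    using C Suc.prems by simp
  show ?case
  proof (cases "j = Suc k")
    case True
    have "circuit_state n C G (Suc k) (\<theta>(j := t)) = C (k + 2) *\<^sub>v (rot (G j) t *\<^sub>v circuit_state n C G k \<theta>)"
      for t
    proof -
      have "circuit_state n C G k (\<theta>(j := t)) = circuit_state n C G k \<theta>"
        using True by (intro circuit_state_cong) auto
      then show ?thesis
        using True by simp
    qed
    moreover have "half_phase_curve (2 ^ n) (\<lambda>t. rot (G j) t *\<^sub>v circuit_state n C G k \<theta>)"
      using G GG Suc.prems True by (intro half_phase_curve_rot circuit_state_carrier) auto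
    ultimately show ?thesis
      using half_phase_curve_mult[OF Ck] by presburger
  next
    case False
    then have "j \<in> {1..k}"
      using Suc.prems by auto
    then have "half_phase_curve (2 ^ n) (\<lambda>t. circuit_state n C G k (\<theta>(j := t)))"
      by (rule Suc.IH) (use Suc.prems in simp)
    then have "half_phase_curve (2 ^ n) (\<lambda>t. rot (G (k + 1)) (\<theta> (k + 1)) *\<^sub>v circuit_state n C G k (\<theta>(j := t)))"
      using G Suc.prems by (intro half_phase_curve_mult rot_carrier) auto
    moreover have "circuit_state n C G (Suc k) (\<theta>(j := t))
        = C (k + 2) *\<^sub>v (rot (G (k + 1)) (\<theta> (k + 1)) *\<^sub>v circuit_state n C G k (\<theta>(j := t)))" for t
      using False by simp
    ultimately show ?thesis
      using half_phase_curve_mult[OF Ck] by presburger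
  qed
qed simp

lemma qfun_trig_deg1_in:
  assumes GG: "\<And>j. j \<in> {1..m} \<Longrightarrow> G j * G j = 1\<^sub>m (2 ^ n)"
    and M: "M \<in> carrier_mat (2 ^ n) (2 ^ n)"
  shows "trig_deg1_in {1..m} (qfun n m C G M)"
  unfolding trig_deg1_in_def qfun_def Let_def
  using expectation_half_phase_curve[OF M circuit_state_half_phase_curve[OF GG]] by simp

end

theorem theorem3:
  fixes n m L :: nat
    and C G :: "nat \<Rightarrow> complex mat"
    and M :: "complex mat"
    and p :: "nat \<Rightarrow> real"
  assumes C: "\<And>j. j \<in> {1..m+1} \<Longrightarrow> unitary_mat (2 ^ n) (C j)"
    and G: "\<And>j. j \<in> {1..m} \<Longrightarrow> hermitian_mat (2 ^ n) (G j)"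
    and Gspec: "\<And>j. j \<in> {1..m} \<Longrightarrow> {k. eigenvalue (G j) k} = {-1, 1}"
    and M: "hermitian_mat (2 ^ n) M"
    and L: "0 < L" "L \<le> m"
  shows "card (qgrid m L) = (\<Sum>k\<le>L. 2 ^ k * (m choose k)) \<and>
         (\<forall>v. card {j\<in>{1..m}. v j \<noteq> 0} \<le> L \<longrightarrow>
            ftilde (qfun n m C G M) m L p (\<lambda>j. p j + v j) = qfun n m C G M (\<lambda>j. p j + v j)) \<and>
         (\<forall>\<alpha>. (\<Sum>j\<in>{1..m}. \<alpha> j) \<le> L \<longrightarrow>
            Dmulti m \<alpha> (\<lambda>\<theta>. qfun n m C G M \<theta> - ftilde (qfun n m C G M) m L p \<theta>) p = 0)"
proof -
  have involution: "G j * G j = 1\<^sub>m (2 ^ n)" if "j \<in> {1..m}" for j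
    using hermitian_involution[OF G[OF that]] Gspec[OF that] by blast
  have trig: "trig_deg1_in {1..m} (qfun n m C G M)"
    using C G M involution
    by (intro qfun_trig_deg1_in) (auto simp: unitary_mat_def hermitian_mat_def)
  show ?thesis
    using card_qgrid ftilde_eq_on_sparse[OF trig qfun_cong] Dmulti_ftilde_eq_0[OF trig qfun_cong]
    by blast
qed

end
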